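(* Let $s\in\mathbb R$, $p,q\in(0,+\infty]$ and $x_0\in\mathbb R^d$, and assume the wavelet system satisfies the dyadic covering property. Then there exists a sequence $\mathcal C\in b^{s,q}_p$ whose divergence exponent at $x_0$ satisfies $\delta_{\mathcal C}(x_0)=-s+\frac dp$.
   Context: Setting: integers $d,N\ge1$, bounded fast-decaying $\psi^{(1)},\dots,\psi^{(N)}:\mathbb R^d\to\mathbb C$, wavelets $\psi^{(i)}_{j,k}(x)=\psi^{(i)}(2^jx-k)$, $j\ge0$, $k\in\mathbb Z^d$; dyadic cubes $\lambda_{j,k}=\prod_{m=1}^d[k_m2^{-j},(k_m+1)2^{-j})$ of scale $j$; coefficients indexed by $(i,\lambda)$; $\Lambda_j$ = pairs $(i,\lambda)$ with $\lambda$ of scale $j$. $b^{s,q}_p$: sequences $(c^{(i)}_\lambda)$ with $\big(\big(\sum_{(i,\lambda)\in\Lambda_j}|c^{(i)}_\lambda2^{(s-d/p)j}|^p\big)^{1/p}\big)_{j\ge0}\in\ell^q$ (supremum if $p=\infty$; $d/p=0$ if $p=\infty$). Divergence exponent $\delta_{\mathcal C}(x)$: supremum of $\gamma$ such that there exist $C>0$ and $(i_n,j_n,k_n)$ with $j_n\to\infty$ and $|c^{(i_n)}_{j_n,k_n}\psi^{(i_n)}_{j_n,k_n}(x)|\ge C2^{\gamma j_n}$. Dyadic covering property: there exist $C_0>0$ and finitely many triplets $(i_l,j_l,k_l)$ with $j_l\ge1$ such that every $x\in[0,1)^d$ has some $l$ with $|\psi^{(i_l)}(2^{j_l}x-k_l)|\ge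 C_0$. *)

theory Defs
  imports "HOL-Analysis.Analysis"
begin

text \<open>Dimension d = CARD('d).
  A coefficient sequence is c :: nat => nat => ('d => int) => complex, c i j k = c^(i)_{j,k}.\<close>

definition dyad_arg :: "nat \<Rightarrow> real^'d \<Rightarrow> ('d::finite \<Rightarrow> int) \<Rightarrow> real^'d" where
  "dyad_arg j x k = (\<chi> m. 2 ^ j * x $ m - of_int (k m))"

definition wav :: "(nat \<Rightarrow> real^'d \<Rightarrow> complex) \<Rightarrow> nat \<Rightarrow> nat \<Rightarrow> ('d::finite \<Rightarrow> int) \<Rightarrow> real^'d \<Rightarrow> complex" where
  "wav \<psi> i j k x = \<psi> i (dyad_arg j x k)"

definition d_over_p :: "'d::finite itself \<Rightarrow> ereal \<Rightarrow> real" where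
  "d_over_p TYPE('d) p = (if p = \<infinity> then 0 else real CARD('d) / real_of_ereal p)"

definition level_norm :: "nat \<Rightarrow> real \<Rightarrow> ereal \<Rightarrow> (nat \<Rightarrow> nat \<Rightarrow> ('d::finite \<Rightarrow> int) \<Rightarrow> complex) \<Rightarrow> nat \<Rightarrow> real" where
  "level_norm N s p c j =
     (if p = \<infinity> then Sup {norm (c i j k) * 2 powr (s * real j) | i k. i \<in> {1..N}}
      else (infsum (\<lambda>(i,k). (norm (c i j k) * 2 powr ((s - d_over_p TYPE('d) p) * real j))
                                 powr real_of_ereal p) ({1..N} \<times> UNIV))
           powr (1 / real_of_ereal p))"

definition in_bspq :: "nat \<Rightarrow> real \<Rightarrow> ereal \<Rightarrow> ereal \<Rightarrow> (nat \<Rightarrow> nat \<Rightarrow> ('d::finite \<Rightarrow> int) \<Rightarrow> complex) \<Rightarrow> bool" where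
  "in_bspq N s p q c \<longleftrightarrow>
     (\<forall>j. if p = \<infinity> then bdd_above {norm (c i j k) * 2 powr (s * real j) | i k. i \<in> {1..N}}
          else (\<lambda>(i,k). (norm (c i j k) * 2 powr ((s - d_over_p TYPE('d) p) * real j))
                          powr real_of_ereal p) summable_on ({1..N} \<times> UNIV)) \<and>
     (if q = \<infinity> then bdd_above (range (level_norm N s p c))
      else summable (\<lambda>j. level_norm N s p c j powr real_of_ereal q))"

text \<open>Divergence exponent delta_C(x) (an extended real: Sup of the empty set is -infinity).\<close>
definition div_exp :: "nat \<Rightarrow> (nat \<Rightarrow> real^'d \<Rightarrow> complex) \<Rightarrow> (nat \<Rightarrow> nat \<Rightarrow> ('d::finite \<Rightarrow> int) \<Rightarrow> complex) \<Rightarrow> real^'d \<Rightarrow> ereal" where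
  "div_exp N \<psi> c x = Sup {ereal \<gamma> | \<gamma>. \<exists>C>0. \<exists>ii jj kk.
       (\<forall>n. ii n \<in> {1..N}) \<and> filterlim jj at_top sequentially \<and>
       (\<forall>n. norm (c (ii n) (jj n) (kk n) * wav \<psi> (ii n) (jj n) (kk n) x) \<ge> C * 2 powr (\<gamma> * real (jj n)))}"

definition dyadic_covering :: "nat \<Rightarrow> (nat \<Rightarrow> real^'d \<Rightarrow> complex) \<Rightarrow> ('d::finite) itself \<Rightarrow> bool" where
  "dyadic_covering N \<psi> _ \<longleftrightarrow> (\<exists>C0>0. \<exists>T :: (nat \<times> nat \<times> ('d \<Rightarrow> int)) set. finite T \<and>
     (\<forall>(i,j,k)\<in>T. i \<in> {1..N} \<and> j \<ge> 1) \<and>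
     (\<forall>x::real^'d. (\<forall>m. 0 \<le> x $ m \<and> x $ m < 1) \<longrightarrow>
        (\<exists>(i,j,k)\<in>T. norm (\<psi> i (dyad_arg j x k)) \<ge> C0)))"

end

theory Submission
  imports Defs "HOL-Real_Asymp.Real_Asymp"
begin

text \<open>Let M be the largest scale occurring in the dyadic covering. Applying the covering
  property to the fractional part of 2^(nM) x0 yields, in every block of scales (nM, (n+1)M],
  a wavelet psi_{j,k} with |psi_{j,k}(x0)| >= C0. Put the single coefficient
  2^((d/p - s) j) (j+1)^(-r) at each of these positions and zero elsewhere. Every level of the
  b^{s,q}_p norm is then at most (j+1)^(-r), which lies in l^q for r = 2/q (r = 1 if q = \<infinity>).
  Boundedness of the wavelets gives delta(x0) <= d/p - s; along the chosen positions the
  polynomial factor (j+1)^(-r) beats 2^(-eps j) for every eps > 0, so delta(x0) >= d/p - s - eps.\<close>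

lemma has_sum_single_support:
  assumes "\<And>x. x \<noteq> a \<Longrightarrow> f x = 0"
  shows "(f has_sum (if a \<in> S then f a else 0)) S"
proof -
  have "(f has_sum (if a \<in> S then f a else 0)) (S \<inter> {a})"
    by (cases "a \<in> S") (simp_all add: Int_absorb1 has_sum_finite[of "{a}", simplified])
  then show ?thesis
    by (subst has_sum_cong_neutral[where g = f and T = "S \<inter> {a}"]) (use assms in auto)
qed

lemma uniform_bound_finite:
  fixes f :: "'i \<Rightarrow> 'a \<Rightarrow> 'b::real_normed_vector"
  assumes "finite I" "\<forall>i\<in>I. \<exists>B. \<forall>x. norm (f i x) \<le> B"
  obtains B where "\<And>i x. i \<in> I \<Longrightarrow> norm (f i x) \<le> B"
proof -
  from assms(2) obtain Bf where Bf: "\<And>i x. i \<in> I \<Longrightarrow> norm (f i x) \<le> Bf i"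
    by metis
  have "Bf i \<le> (\<Sum>i\<in>I. \<bar>Bf i\<bar>)" if "i \<in> I" for i
    using member_le_sum[OF that _ \<open>finite I\<close>, of "\<lambda>i. \<bar>Bf i\<bar>"] by simp
  with Bf show thesis
    by (intro that) (blast intro: order_trans)
qed

lemma strict_mono_blocks:
  fixes l :: "nat \<Rightarrow> nat"
  assumes "\<And>n. 1 \<le> l n \<and> l n \<le> M"
  shows "strict_mono (\<lambda>n. n * M + l n)"
proof (rule strict_monoI_Suc)
  fix n
  have "n * M + l n \<le> n * M + M" using assms by simp
  also have "\<dots> < Suc n * M + l (Suc n)" using assms[of "Suc n"] by simp
  finally show "n * M + l n < Suc n * M + l (Suc n)" .
qed

lemma dyad_arg_rescale:
  "dyad_arg (n + l) x (\<lambda>m. 2 ^ l * \<lfloor>2 ^ n * x $ m\<rfloor> + k m)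
     = dyad_arg l (\<chi> m. frac (2 ^ n * x $ m)) k"
  by (simp add: vec_eq_iff dyad_arg_def frac_def power_add algebra_simps)

lemma dyadic_covering_at_scale:
  fixes \<psi> :: "nat \<Rightarrow> real^'d::finite \<Rightarrow> complex" and x :: "real^'d"
  assumes cover: "\<forall>y::real^'d. (\<forall>m. 0 \<le> y $ m \<and> y $ m < 1) \<longrightarrow>
        (\<exists>(i,l,k)\<in>T. norm (\<psi> i (dyad_arg l y k)) \<ge> C0)"
  obtains i l k where "(i, l, k) \<in> T"
    "C0 \<le> norm (wav \<psi> i (n + l) (\<lambda>m. 2 ^ l * \<lfloor>2 ^ n * x $ m\<rfloor> + k m) x)"
proof -
  have "\<forall>m. 0 \<le> (\<chi> m. frac (2 ^ n * x $ m)) $ m \<and> (\<chi> m. frac (2 ^ n * x $ m)) $ m < 1"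
    by (simp add: frac_lt_1)
  then show ?thesis
    using cover that by (fastforce simp: wav_def dyad_arg_rescale)
qed

lemma dyadic_covering_local:
  fixes \<psi> :: "nat \<Rightarrow> real^'d::finite \<Rightarrow> complex"
  assumes "dyadic_covering N \<psi> TYPE('d)"
  obtains C0 M where "C0 > 0"
    "\<And>(x :: real^'d) n. \<exists>i l k. i \<in> {1..N} \<and> 1 \<le> l \<and> l \<le> M \<and> C0 \<le> norm (wav \<psi> i (n + l) k x)"
proof -
  from assms obtain C0 and T :: "(nat \<times> nat \<times> ('d \<Rightarrow> int)) set"
    where "C0 > 0" and "finite T" and T: "\<forall>(i,l,k)\<in>T. i \<in> {1..N} \<and> l \<ge> 1"
      and cover: "\<forall>y::real^'d. (\<forall>m. 0 \<le> y $ m \<and> y $ m < 1) \<longrightarrow>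
        (\<exists>(i,l,k)\<in>T. norm (\<psi> i (dyad_arg l y k)) \<ge> C0)"
    unfolding dyadic_covering_def by blast
  define M where "M = Max ((fst \<circ> snd) ` T)"
  have "\<exists>i l k. i \<in> {1..N} \<and> 1 \<le> l \<and> l \<le> M \<and> C0 \<le> norm (wav \<psi> i (n + l) k x)"
    for x :: "real^'d" and n
  proof -
    obtain i l k where "(i, l, k) \<in> T"
      and "C0 \<le> norm (wav \<psi> i (n + l) (\<lambda>m. 2 ^ l * \<lfloor>2 ^ n * x $ m\<rfloor> + k m) x)"
      by (rule dyadic_covering_at_scale[OF cover])
    moreover from this(1) have "l \<le> M"
      unfolding M_def by (intro Max_ge) (use \<open>finite T\<close> in \<open>force+\<close>)
    ultimately show ?thesis
      using T by blast
  qed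
  with \<open>C0 > 0\<close> show thesis
    by (rule that)
qed

lemma dyadic_covering_sequence:
  fixes \<psi> :: "nat \<Rightarrow> real^'d::finite \<Rightarrow> complex" and x :: "real^'d"
  assumes "dyadic_covering N \<psi> TYPE('d)"
  obtains C0 and ii jj :: "nat \<Rightarrow> nat" and kk where "C0 > 0" "\<And>n. ii n \<in> {1..N}" "strict_mono jj"
    "\<And>n. C0 \<le> norm (wav \<psi> (ii n) (jj n) (kk n) x)"
proof -
  obtain C0 M where "C0 > 0" and local:
    "\<And>n. \<exists>i l k. i \<in> {1..N} \<and> 1 \<le> l \<and> l \<le> M \<and> C0 \<le> norm (wav \<psi> i (n + l) k x)"
    using dyadic_covering_local[OF assms] by metis
  obtain ii l :: "nat \<Rightarrow> nat" and kk where choice: "\<And>n. ii n \<in> {1..N} \<and> 1 \<le> l n \<and> l n \<le> M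
      \<and> C0 \<le> norm (wav \<psi> (ii n) (n * M + l n) (kk n) x)"
    using local[of "_ * M"] by metis
  show thesis
  proof (rule that[of C0 ii "\<lambda>n. n * M + l n" kk])
    show "strict_mono (\<lambda>n. n * M + l n)"
      using choice by (intro strict_mono_blocks) blast
  qed (use \<open>C0 > 0\<close> choice in auto)
qed

definition lq_weight :: "ereal \<Rightarrow> nat \<Rightarrow> real" where
  "lq_weight q j = (real j + 1) powr - (if q = \<infinity> then 1 else 2 / real_of_ereal q)"

lemma lq_weight_pos: "0 < lq_weight q j"
  by (simp add: lq_weight_def)

lemma lq_weight_le_1:
  assumes "0 < q"
  shows "lq_weight q j \<le> 1"
proof -
  have "0 \<le> (if q = \<infinity> then 1 else 2 / real_of_ereal q)"
    using assms by (cases q) auto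
  then have "1 \<le> (real j + 1) powr (if q = \<infinity> then 1 else 2 / real_of_ereal q)"
    by (intro ge_one_powr_ge_zero) auto
  then show ?thesis
    by (simp add: lq_weight_def powr_minus inverse_le_1_iff)
qed

lemma summable_lq_weight_powr:
  assumes "0 < q" "q \<noteq> \<infinity>"
  shows "summable (\<lambda>j. lq_weight q j powr real_of_ereal q)"
proof -
  have "lq_weight q j powr real_of_ereal q = real (Suc j) powr (-2)" for j
    using assms by (cases q) (auto simp: lq_weight_def powr_powr add.commute)
  moreover have "summable (\<lambda>j. real (Suc j) powr (-2))"
    using summable_Suc_iff[of "\<lambda>j. real j powr (-2)"] by (simp add: summable_real_powr_iff)
  ultimately show ?thesis
    by simp
qed

lemma eventually_exp_le_lq_weight:
  assumes "0 < e"
  shows "\<forall>\<^sub>F j in sequentially. 2 powr (- e * real j) \<le> lq_weight q j"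
proof -
  define r where "r = (if q = \<infinity> then 1 else 2 / real_of_ereal q)"
  have "\<forall>\<^sub>F j in sequentially. (real j + 1) powr r \<le> 2 powr (e * real j)"
    using assms by real_asymp
  then show ?thesis
  proof (rule eventually_mono)
    fix j :: nat
    assume "(real j + 1) powr r \<le> 2 powr (e * real j)"
    then have "inverse (2 powr (e * real j)) \<le> inverse ((real j + 1) powr r)"
      by (intro le_imp_inverse_le) auto
    then show "2 powr (- e * real j) \<le> lq_weight q j"
      by (simp add: lq_weight_def r_def powr_minus)
  qed
qed

definition level_finite ::
    "nat \<Rightarrow> real \<Rightarrow> ereal \<Rightarrow> (nat \<Rightarrow> nat \<Rightarrow> ('d::finite \<Rightarrow> int) \<Rightarrow> complex) \<Rightarrow> nat \<Rightarrow> bool" where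
  "level_finite N s p c j \<longleftrightarrow>
     (if p = \<infinity> then bdd_above {norm (c i j k) * 2 powr (s * real j) | i k. i \<in> {1..N}}
      else (\<lambda>(i,k). (norm (c i j k) * 2 powr ((s - d_over_p TYPE('d) p) * real j))
                      powr real_of_ereal p) summable_on ({1..N} \<times> UNIV))"

lemma in_bspq_iff_level_finite:
  "in_bspq N s p q c \<longleftrightarrow> (\<forall>j. level_finite N s p c j) \<and>
     (if q = \<infinity> then bdd_above (range (level_norm N s p c))
      else summable (\<lambda>j. level_norm N s p c j powr real_of_ereal q))"
  unfolding in_bspq_def level_finite_def by (rule refl)

lemma in_bspq_if_level_norm_le_lq_weight:
  assumes "0 < q" "\<And>j. level_finite N s p c j"
    and "\<And>j. 0 \<le> level_norm N s p c j" "\<And>j. level_norm N s p c j \<le> lq_weight q j"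
  shows "in_bspq N s p q c"
proof (cases "q = \<infinity>")
  case True
  have "level_norm N s p c j \<le> 1" for j
    using assms(4)[of j] lq_weight_le_1[OF \<open>0 < q\<close>, of j] by linarith
  then show ?thesis
    using True assms(2) by (auto simp: in_bspq_iff_level_finite bdd_above_def)
next
  case False
  have "summable (\<lambda>j. level_norm N s p c j powr real_of_ereal q)"
  proof (rule summable_comparison_test'[OF summable_lq_weight_powr[OF \<open>0 < q\<close> False]])
    fix j
    show "norm (level_norm N s p c j powr real_of_ereal q) \<le> lq_weight q j powr real_of_ereal q"
      using assms(3,4)[of j] \<open>0 < q\<close> False by (cases q) (auto intro: powr_mono2)
  qed
  then show ?thesis
    using False assms(2) by (simp add: in_bspq_iff_level_finite)
qed

lemma level_norm_single_entry:
  fixes c :: "nat \<Rightarrow> nat \<Rightarrow> ('d::finite \<Rightarrow> int) \<Rightarrow> complex"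
  assumes "N \<ge> 1" "0 < p"
    and single: "\<And>i k. (i, k) \<noteq> z \<Longrightarrow> c i j k = 0"
    and bound: "\<And>i k. norm (c i j k) * 2 powr ((s - d_over_p TYPE('d) p) * real j) \<le> b"
  shows "level_finite N s p c j" "0 \<le> level_norm N s p c j" "level_norm N s p c j \<le> b"
proof -
  have "0 \<le> b"
    by (rule order_trans[OF _ bound[of 0 "\<lambda>_. 0"]]) simp
  have "level_finite N s p c j \<and> 0 \<le> level_norm N s p c j \<and> level_norm N s p c j \<le> b"
  proof (cases "p = \<infinity>")
    case True
    define S where "S = {norm (c i j k) * 2 powr (s * real j) | i k. i \<in> {1..N}}"
    have le_b: "x \<le> b" if "x \<in> S" for x
      using that bound True by (auto simp: S_def d_over_p_def)
    have elem: "norm (c 1 j (\<lambda>_. 0)) * 2 powr (s * real j) \<in> S"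
      using \<open>N \<ge> 1\<close> by (auto simp: S_def)
    have "bdd_above S"
      using le_b by (auto simp: bdd_above_def)
    have "0 \<le> Sup S"
      by (rule order_trans[OF _ cSup_upper[OF elem \<open>bdd_above S\<close>]]) simp
    moreover have "Sup S \<le> b"
      using elem le_b by (intro cSup_least) auto
    ultimately show ?thesis
      using \<open>bdd_above S\<close> True by (simp add: level_finite_def level_norm_def S_def)
  next
    case False
    define P where "P = real_of_ereal p"
    have "P > 0"
      using \<open>0 < p\<close> False by (cases p) (auto simp: P_def)
    define F where "F = (\<lambda>(i,k). (norm (c i j k) * 2 powr ((s - d_over_p TYPE('d) p) * real j)) powr P)"
    have "\<And>x. x \<noteq> z \<Longrightarrow> F x = 0"
      using single by (auto simp: F_def)
    from has_sum_single_support[OF this] have sum_F: "(F has_sum (if z \<in> {1..N} \<times> UNIV then F z else 0)) ({1..N} \<times> UNIV)" .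
    have "F z \<le> b powr P"
      using bound \<open>P > 0\<close> by (auto simp: F_def case_prod_beta intro: powr_mono2)
    then have "infsum F ({1..N} \<times> UNIV) \<le> b powr P"
      using infsumI[OF sum_F] by simp
    then have "infsum F ({1..N} \<times> UNIV) powr (1 / P) \<le> (b powr P) powr (1 / P)"
      using \<open>P > 0\<close> by (intro powr_mono2) (auto intro: infsum_nonneg simp: F_def case_prod_beta)
    also have "\<dots> = b"
      using \<open>P > 0\<close> \<open>0 \<le> b\<close> by (simp add: powr_powr)
    finally show ?thesis
      using False has_sum_imp_summable[OF sum_F]
      by (simp add: level_finite_def level_norm_def F_def P_def)
  qed
  then show "level_finite N s p c j" "0 \<le> level_norm N s p c j" "level_norm N s p c j \<le> b"
    by auto
qed

lemma div_exp_le: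
  assumes bounded: "\<forall>i\<in>{1..N}. \<exists>B. \<forall>y. norm (\<psi> i y) \<le> B"
    and coeff: "\<And>i j k. norm (c i j k) \<le> 2 powr (\<gamma> * real j)"
  shows "div_exp N \<psi> c x \<le> ereal \<gamma>"
proof -
  obtain B where B: "\<And>i y. i \<in> {1..N} \<Longrightarrow> norm (\<psi> i y) \<le> B"
    using uniform_bound_finite[OF finite_atLeastAtMost bounded] by blast
  show ?thesis
    unfolding div_exp_def
  proof (rule Sup_least, clarify)
    fix \<gamma>' C and ii jj :: "nat \<Rightarrow> nat" and kk
    assume "C > 0" and ii: "\<forall>n. ii n \<in> {1..N}" and jj: "filterlim jj at_top sequentially"
      and lower: "\<forall>n. C * 2 powr (\<gamma>' * real (jj n))
                     \<le> norm (c (ii n) (jj n) (kk n) * wav \<psi> (ii n) (jj n) (kk n) x)"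
    have bounded_growth: "2 powr ((\<gamma>' - \<gamma>) * real (jj n)) \<le> B / C" for n
    proof -
      have "C * 2 powr (\<gamma>' * real (jj n))
              \<le> norm (c (ii n) (jj n) (kk n)) * norm (\<psi> (ii n) (dyad_arg (jj n) x (kk n)))"
        using lower by (simp add: wav_def norm_mult)
      also have "\<dots> \<le> 2 powr (\<gamma> * real (jj n)) * B"
        using coeff B ii by (intro mult_mono) (auto intro: order_trans[OF norm_ge_zero])
      finally have "C * 2 powr ((\<gamma>' - \<gamma>) * real (jj n)) * 2 powr (\<gamma> * real (jj n))
                   \<le> B * 2 powr (\<gamma> * real (jj n))"
        by (simp add: left_diff_distrib powr_diff field_simps)
      with \<open>C > 0\<close> show ?thesis
        by (simp add: pos_le_divide_eq mult.commute)
    qed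
    show "ereal \<gamma>' \<le> ereal \<gamma>"
    proof (rule ccontr)
      assume "\<not> ereal \<gamma>' \<le> ereal \<gamma>"
      then have "filterlim (\<lambda>j::nat. 2 powr ((\<gamma>' - \<gamma>) * real j)) at_top sequentially"
        by simp real_asymp
      from filterlim_compose[OF this jj]
      have "\<forall>\<^sub>F n in sequentially. B / C < 2 powr ((\<gamma>' - \<gamma>) * real (jj n))"
        by (simp add: filterlim_at_top_dense)
      with bounded_growth show False
        by (auto simp: eventually_sequentially not_less[symmetric])
    qed
  qed
qed

lemma div_exp_ge:
  assumes "C > 0" "\<And>n. ii n \<in> {1..N}" "filterlim jj at_top sequentially"
    and "\<forall>\<^sub>F n in sequentially. C * 2 powr (\<gamma> * real (jj n))
           \<le> norm (c (ii n) (jj n) (kk n) * wav \<psi> (ii n) (jj n) (kk n) x)"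
  shows "ereal \<gamma> \<le> div_exp N \<psi> c x"
proof -
  obtain n0 where n0: "\<And>n. n \<ge> n0 \<Longrightarrow> C * 2 powr (\<gamma> * real (jj n))
           \<le> norm (c (ii n) (jj n) (kk n) * wav \<psi> (ii n) (jj n) (kk n) x)"
    using assms(4) by (auto simp: eventually_sequentially)
  have "filterlim (\<lambda>n. jj (n + n0)) at_top sequentially"
    using filterlim_compose[OF assms(3) filterlim_add_const_nat_at_top] .
  then show ?thesis
    unfolding div_exp_def using assms(1,2) n0
    by (intro Sup_upper CollectI exI[of _ \<gamma>] conjI refl exI[of _ C]
        exI[of _ "\<lambda>n. ii (n + n0)"] exI[of _ "\<lambda>n. jj (n + n0)"] exI[of _ "\<lambda>n. kk (n + n0)"]) auto
qed

definition spike_seq ::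
    "(nat \<Rightarrow> nat) \<Rightarrow> (nat \<Rightarrow> nat) \<Rightarrow> (nat \<Rightarrow> 'k) \<Rightarrow> (nat \<Rightarrow> real) \<Rightarrow> nat \<Rightarrow> nat \<Rightarrow> 'k \<Rightarrow> complex" where
  "spike_seq ii jj kk a i j k =
     (if \<exists>n. jj n = j \<and> ii n = i \<and> kk n = k then complex_of_real (a j) else 0)"

lemma spike_seq_at [simp]: "spike_seq ii jj kk a (ii n) (jj n) (kk n) = complex_of_real (a (jj n))"
  by (auto simp: spike_seq_def)

lemma norm_spike_seq_le: "(\<And>j. 0 \<le> a j) \<Longrightarrow> norm (spike_seq ii jj kk a i j k) \<le> a j"
  by (simp add: spike_seq_def)

lemma spike_seq_single_entry:
  assumes "inj jj"
  obtains z where "\<And>i k. (i, k) \<noteq> z \<Longrightarrow> spike_seq ii jj kk a i j k = 0"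
proof (cases "j \<in> range jj")
  case True
  then obtain n where "j = jj n"
    by blast
  with assms show thesis
    by (intro that[of "(ii n, kk n)"]) (auto simp: spike_seq_def inj_eq)
next
  case False
  then show thesis
    by (intro that) (auto simp: spike_seq_def)
qed

lemma in_bspq_spike_seq:
  fixes kk :: "nat \<Rightarrow> 'd::finite \<Rightarrow> int"
  assumes "N \<ge> 1" "0 < p" "0 < q" "inj jj"
  shows "in_bspq N s p q
           (spike_seq ii jj kk (\<lambda>j. 2 powr ((- s + d_over_p TYPE('d) p) * real j) * lq_weight q j))"
    (is "in_bspq N s p q ?c")
proof (rule in_bspq_if_level_norm_le_lq_weight)
  fix j
  obtain z where single: "\<And>i k. (i, k) \<noteq> z \<Longrightarrow> ?c i j k = 0"
    using spike_seq_single_entry[OF \<open>inj jj\<close>] by metis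
  have bound: "norm (?c i j k) * 2 powr ((s - d_over_p TYPE('d) p) * real j) \<le> lq_weight q j" for i k
  proof -
    have "norm (?c i j k) \<le> 2 powr ((- s + d_over_p TYPE('d) p) * real j) * lq_weight q j"
      by (rule norm_spike_seq_le) (simp add: lq_weight_pos less_imp_le)
    then have "norm (?c i j k) * 2 powr ((s - d_over_p TYPE('d) p) * real j)
          \<le> 2 powr ((- s + d_over_p TYPE('d) p) * real j) * lq_weight q j * 2 powr ((s - d_over_p TYPE('d) p) * real j)"
      by (rule mult_right_mono) simp
    also have "\<dots> = lq_weight q j"
      by (simp add: powr_add[symmetric] algebra_simps)
    finally show ?thesis .
  qed
  show "level_finite N s p ?c j" "0 \<le> level_norm N s p ?c j" "level_norm N s p ?c j \<le> lq_weight q j"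
    using level_norm_single_entry[where c = ?c and j = j, OF \<open>N \<ge> 1\<close> \<open>0 < p\<close> single bound]
    by simp_all
qed (rule \<open>0 < q\<close>)

lemma div_exp_spike_seq:
  assumes bounded: "\<forall>i\<in>{1..N}. \<exists>B. \<forall>y. norm (\<psi> i y) \<le> B"
    and "0 < q" "C > 0" "\<And>n. ii n \<in> {1..N}" "strict_mono jj"
    and wavelet_large: "\<And>n. C \<le> norm (wav \<psi> (ii n) (jj n) (kk n) x)"
  shows "div_exp N \<psi> (spike_seq ii jj kk (\<lambda>j. 2 powr (\<gamma> * real j) * lq_weight q j)) x = ereal \<gamma>"
    (is "div_exp N \<psi> ?c x = _")
proof (rule antisym)
  have "norm (?c i j k) \<le> 2 powr (\<gamma> * real j)" for i j k
  proof -
    have "norm (?c i j k) \<le> 2 powr (\<gamma> * real j) * lq_weight q j"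
      by (rule norm_spike_seq_le) (simp add: lq_weight_pos less_imp_le)
    also have "\<dots> \<le> 2 powr (\<gamma> * real j)"
      using lq_weight_le_1[OF \<open>0 < q\<close>] by (simp add: mult_left_le)
    finally show ?thesis .
  qed
  then show "div_exp N \<psi> ?c x \<le> ereal \<gamma>"
    by (rule div_exp_le[OF bounded])
  have jj: "filterlim jj at_top sequentially"
    using filterlim_subseq[OF \<open>strict_mono jj\<close>] .
  show "ereal \<gamma> \<le> div_exp N \<psi> ?c x"
  proof (rule ereal_le_epsilon2)
    fix e :: real
    assume "0 < e"
    have "\<forall>\<^sub>F n in sequentially. C * 2 powr ((\<gamma> - e) * real (jj n))
            \<le> norm (?c (ii n) (jj n) (kk n) * wav \<psi> (ii n) (jj n) (kk n) x)"
      using eventually_compose_filterlim[OF eventually_exp_le_lq_weight[OF \<open>0 < e\<close>] jj]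
    proof (rule eventually_mono)
      fix n
      assume "2 powr (- e * real (jj n)) \<le> lq_weight q (jj n)"
      have "2 powr ((\<gamma> - e) * real (jj n)) = 2 powr (\<gamma> * real (jj n)) * 2 powr (- e * real (jj n))"
        by (simp add: powr_add[symmetric] algebra_simps)
      also have "\<dots> \<le> 2 powr (\<gamma> * real (jj n)) * lq_weight q (jj n)"
        using \<open>2 powr (- e * real (jj n)) \<le> lq_weight q (jj n)\<close> by (rule mult_left_mono) simp
      finally have "2 powr ((\<gamma> - e) * real (jj n)) \<le> 2 powr (\<gamma> * real (jj n)) * lq_weight q (jj n)" .
      then have "C * 2 powr ((\<gamma> - e) * real (jj n))
                   \<le> norm (wav \<psi> (ii n) (jj n) (kk n) x) * (2 powr (\<gamma> * real (jj n)) * lq_weight q (jj n))"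
        using \<open>C > 0\<close> by (intro mult_mono[OF wavelet_large]) auto
      then show "C * 2 powr ((\<gamma> - e) * real (jj n))
                   \<le> norm (?c (ii n) (jj n) (kk n) * wav \<psi> (ii n) (jj n) (kk n) x)"
        by (simp add: norm_mult abs_mult lq_weight_pos less_imp_le mult_ac)
    qed
    then have "ereal (\<gamma> - e) \<le> div_exp N \<psi> ?c x"
      by (rule div_exp_ge[OF \<open>C > 0\<close> \<open>\<And>n. ii n \<in> {1..N}\<close> jj])
    then have "ereal (\<gamma> - e) + ereal e \<le> div_exp N \<psi> ?c x + ereal e"
      by (rule add_right_mono)
    then show "ereal \<gamma> \<le> div_exp N \<psi> ?c x + ereal e"
      by simp
  qed
qed

theorem mainTheorem15:
  fixes N :: nat and \<psi> :: "nat \<Rightarrow> real^'d::finite \<Rightarrow> complex"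
    and s :: real and p q :: ereal and x0 :: "real^'d"
  assumes N: "N \<ge> 1"
    and bounded: "\<forall>i\<in>{1..N}. \<exists>B. \<forall>x. norm (\<psi> i x) \<le> B"
    and fast_decay: "\<forall>i\<in>{1..N}. \<forall>M::real. \<exists>C. \<forall>x. norm (\<psi> i x) \<le> C * (1 + norm x) powr (- M)"
    and p: "0 < p" and q: "0 < q"
    and cov: "dyadic_covering N \<psi> TYPE('d)"
  shows "\<exists>c. in_bspq N s p q c \<and>
             div_exp N \<psi> c x0 = ereal (- s + d_over_p TYPE('d) p)"
proof -
  obtain C0 and ii jj :: "nat \<Rightarrow> nat" and kk where "C0 > 0" and ii: "\<And>n. ii n \<in> {1..N}"
    and jj: "strict_mono jj" and wavelet_large: "\<And>n. C0 \<le> norm (wav \<psi> (ii n) (jj n) (kk n) x0)"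
    using dyadic_covering_sequence[OF cov] by metis
  define c where "c = spike_seq ii jj kk (\<lambda>j. 2 powr ((- s + d_over_p TYPE('d) p) * real j) * lq_weight q j)"
  have "in_bspq N s p q c"
    unfolding c_def by (rule in_bspq_spike_seq[OF N p q strict_mono_imp_inj_on[OF jj]])
  moreover have "div_exp N \<psi> c x0 = ereal (- s + d_over_p TYPE('d) p)"
    unfolding c_def by (rule div_exp_spike_seq[OF bounded q \<open>C0 > 0\<close> ii jj wavelet_large])
  ultimately show ?thesis
    by blast
qed

end
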